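(* On the classical Robba ring $\mathcal R(\mathbb Z_p,K)$ the nice topology coincides with the inductive limit topology.
   Context: $p$ is an odd prime, $K$ a complete discretely valued field with $\mathbb Q_p\subseteq K\subseteq\mathbb C_p$, $o_K$ its ring of integers. The classical Robba ring $\mathcal R(\mathbb Z_p,K)$ is the ring of Laurent series $\sum_{n\in\mathbb Z}a_nT^n$ ($a_n\in K$) converging on some annulus $r\le|T|<1$, i.e. with $|a_n|\rho^n\to0$ as $|n|\to\infty$ for all $\rho\in[r,1)$; here $T=\gamma-1$ for the generator $\gamma$ of $\mathbb Z_p$ (it is the case $G=\mathbb Z_p$, $d=1$, $b_1=T$ of the generalized Robba ring). For $r\le\rho<\rho'<1$ put $\|x\|_{\rho,\rho'}=\max(\sup_n|a_n|\rho^n,\sup_n|a_n|\rho'^n)$; $D_{[r,1)}(\mathbb Z_p,K)$ denotes the Fréchet space of series converging on $r\le|T|<1$ with the topology given by these norms, and the inductive limit topology on $\mathcal R(\mathbb Z_p,K)=\varinjlim_{r\to1}D_{[r,1)}(\mathbb Z_p,K)$ is the locally convex inductive limit topology. Nice topology: for $x_0=\sum_nc_{0,n}T^n$ let $L_{x_0}=\{\sum_nd_nT^n\in\mathcal R(\mathbb Z_p,K):|c_{0,-n}||d_n|\le1\ \forall n\}$; the nice topology is the locally convex topology in which an $o_K$-lattice is open iff it contains some $L_{x_0}$. *)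

theory Defs
  imports Complex_Main "HOL-Computational_Algebra.Primes"
begin

text \<open>A complete discretely valued field K containing Q_p, given abstractly by an
absolute value v on a field of characteristic 0 with v(p) = 1/p.\<close>

definition cdv_field_over_Qp :: "nat \<Rightarrow> ('k::field_char_0 \<Rightarrow> real) \<Rightarrow> bool" where
  "cdv_field_over_Qp p v \<longleftrightarrow>
     (\<forall>x. 0 \<le> v x) \<and> (\<forall>x. v x = 0 \<longleftrightarrow> x = 0) \<and>
     (\<forall>x y. v (x * y) = v x * v y) \<and>
     (\<forall>x y. v (x + y) \<le> max (v x) (v y)) \<and>
     v (of_nat p) = 1 / real p \<and>
     (\<exists>\<pi>. 0 < v \<pi> \<and> v \<pi> < 1 \<and> (\<forall>x. x \<noteq> 0 \<longrightarrow> (\<exists>k::int. v x = v \<pi> powi k))) \<and>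
     (\<forall>f::nat \<Rightarrow> 'k. (\<forall>\<epsilon>>0. \<exists>N. \<forall>m\<ge>N. \<forall>n\<ge>N. v (f m - f n) < \<epsilon>) \<longrightarrow>
        (\<exists>l. \<forall>\<epsilon>>0. \<exists>N. \<forall>n\<ge>N. v (f n - l) < \<epsilon>))"

text \<open>Laurent series (coefficients indexed by int) converging on r \<le> |T| < 1.\<close>
definition D_ann :: "('k \<Rightarrow> real) \<Rightarrow> real \<Rightarrow> (int \<Rightarrow> 'k) set" where
  "D_ann v r = {a. \<forall>\<rho>. r \<le> \<rho> \<and> \<rho> < 1 \<longrightarrow>
        ((\<lambda>n. v (a n) * \<rho> powi n) \<longlongrightarrow> 0) cofinite}"

definition Robba :: "('k \<Rightarrow> real) \<Rightarrow> (int \<Rightarrow> 'k) set" where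
  "Robba v = (\<Union>r\<in>{0<..<1}. D_ann v r)"

definition rnorm :: "('k \<Rightarrow> real) \<Rightarrow> real \<Rightarrow> real \<Rightarrow> (int \<Rightarrow> 'k) \<Rightarrow> real" where
  "rnorm v \<rho> \<rho>' a = max (SUP n. v (a n) * \<rho> powi n) (SUP n. v (a n) * \<rho>' powi n)"

definition nbhd0_D :: "('k \<Rightarrow> real) \<Rightarrow> real \<Rightarrow> (int \<Rightarrow> 'k) set \<Rightarrow> bool" where
  "nbhd0_D v r S \<longleftrightarrow> S \<subseteq> D_ann v r \<and>
     (\<exists>F \<epsilon>. finite F \<and> (\<forall>(\<rho>, \<rho>')\<in>F. r \<le> \<rho> \<and> \<rho> < \<rho>' \<and> \<rho>' < 1) \<and> 0 < \<epsilon> \<and>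
        {a \<in> D_ann v r. \<forall>(\<rho>, \<rho>')\<in>F. rnorm v \<rho> \<rho>' a < \<epsilon>} \<subseteq> S)"

definition oK_submodule :: "('k::field \<Rightarrow> real) \<Rightarrow> (int \<Rightarrow> 'k) set \<Rightarrow> bool" where
  "oK_submodule v L \<longleftrightarrow> L \<subseteq> Robba v \<and> (\<lambda>n. 0) \<in> L \<and>
     (\<forall>a\<in>L. \<forall>b\<in>L. (\<lambda>n. a n + b n) \<in> L) \<and>
     (\<forall>c a. v c \<le> 1 \<and> a \<in> L \<longrightarrow> (\<lambda>n. c * a n) \<in> L)"

definition translate :: "(int \<Rightarrow> 'k::plus) \<Rightarrow> (int \<Rightarrow> 'k) set \<Rightarrow> (int \<Rightarrow> 'k) set" where
  "translate x L = (\<lambda>l n. x n + l n) ` L"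

definition L_nice :: "('k \<Rightarrow> real) \<Rightarrow> (int \<Rightarrow> 'k) \<Rightarrow> (int \<Rightarrow> 'k) set" where
  "L_nice v x0 = {d \<in> Robba v. \<forall>n. v (x0 (- n)) * v (d n) \<le> 1}"

definition nice_open :: "('k::field \<Rightarrow> real) \<Rightarrow> (int \<Rightarrow> 'k) set \<Rightarrow> bool" where
  "nice_open v U \<longleftrightarrow> U \<subseteq> Robba v \<and>
     (\<forall>x\<in>U. \<exists>L. oK_submodule v L \<and> (\<exists>x0\<in>Robba v. L_nice v x0 \<subseteq> L) \<and> translate x L \<subseteq> U)"

definition indlim_open :: "('k::field \<Rightarrow> real) \<Rightarrow> (int \<Rightarrow> 'k) set \<Rightarrow> bool" where
  "indlim_open v U \<longleftrightarrow> U \<subseteq> Robba v \<and>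
     (\<forall>x\<in>U. \<exists>L. oK_submodule v L \<and> (\<forall>r\<in>{0<..<1}. nbhd0_D v r (L \<inter> D_ann v r)) \<and>
        translate x L \<subseteq> U)"

end

theory Submission
  imports Defs
begin

text \<open>
  Both topologies are described by lattice neighbourhoods \<open>x + L\<close>, so it suffices to compare
  which \<open>o_K\<close>-lattices \<open>L\<close> are admissible:

  \<^item> Every nice lattice \<open>L_{x\<^sub>0}\<close> meets each Frechet space \<open>D_[r,1)\<close> in a neighbourhood of \<open>0\<close>:
    the coefficients of \<open>x\<^sub>0\<close> are bounded by \<open>C \<rho>\<^sup>-\<^sup>n\<close> on some circle \<open>\<rho>\<close>, so a norm ball of
    radius \<open>1/C\<close> lies in \<open>L_{x\<^sub>0}\<close> (lemma \<open>L_nice_nbhd\<close>).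
  \<^item> Conversely, if \<open>L \<inter> D_[r,1)\<close> is a neighbourhood of \<open>0\<close> for every \<open>r\<close>, then \<open>L\<close> contains
    weighted balls \<open>B\<^sub>k\<close> for a sequence of radii \<open>r\<^sub>k \<rightarrow> 1\<close>.  From their sizes we build a series
    \<open>x\<^sub>0\<close> in the Robba ring whose coefficients are just large enough (this uses that the value
    group contains the powers of \<open>p\<close>), and show \<open>L_{x\<^sub>0} \<subseteq> L\<close> by splitting each \<open>d \<in> L_{x\<^sub>0}\<close> into
    its nonnegative part, a negative tail and finitely many exceptional terms, each lying in
    one of the balls (lemmas \<open>exists_nice_generator\<close>, \<open>L_nice_subset\<close>).
\<close>

text \<open>The only properties of the valuation used are those of a multiplicative absolute value.\<close>
locale absolute_value =
  fixes v :: "'k::field \<Rightarrow> real"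
  assumes nonneg: "0 \<le> v x"
    and zero_iff: "v x = 0 \<longleftrightarrow> x = 0"
    and mult: "v (x * y) = v x * v y"
begin

lemma zero [simp]: "v 0 = 0"
  by (simp add: zero_iff)

lemma one [simp]: "v 1 = 1"
proof -
  have "v 1 * v 1 = v 1 * 1" using mult[of 1 1] by simp
  moreover have "v 1 \<noteq> 0" by (simp add: zero_iff)
  ultimately show ?thesis by (metis mult_left_cancel)
qed

lemma inverse: "v (inverse x) = inverse (v x)"
proof (cases "x = 0")
  case False
  then have "v x * v (inverse x) = 1" by (simp flip: mult)
  then show ?thesis by (metis inverse_unique)
qed simp

lemma power: "v (x ^ n) = v x ^ n"
  by (induction n) (simp_all add: mult)

lemma powi: "v (x powi k) = v x powi k"
  by (simp add: power_int_def power inverse)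

lemma value_within_factor:
  assumes vp: "v (of_nat p) = 1 / real p" and p: "p > 1" and T: "T > 0"
  shows "\<exists>c. T \<le> v c \<and> v c \<le> real p * T"
proof -
  define k where "k = \<lceil>log (real p) T\<rceil>"
  have "v ((of_nat p) powi (- k)) = real p powr real_of_int k"
    using vp p by (simp add: powi inverse power_int_minus powr_real_of_int' flip: power_int_inverse)
  moreover have "T \<le> real p powr real_of_int k"
  proof -
    have "T = real p powr log (real p) T" using p T by simp
    also have "\<dots> \<le> real p powr real_of_int k" using p by (intro powr_mono) (auto simp: k_def)
    finally show ?thesis .
  qed
  moreover have "real p powr real_of_int k \<le> real p * T"
  proof -
    have "real p powr real_of_int k \<le> real p powr (log (real p) T + 1)"
      using p by (intro powr_mono) (auto simp: k_def)
    also have "\<dots> = real p * T" using p T by (simp add: powr_add)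
    finally show ?thesis .
  qed
  ultimately show ?thesis by metis
qed

lemma series_with_values:
  assumes vp: "v (of_nat p) = 1 / real p" and p: "p > 1" and T: "\<And>j. T j > 0"
  shows "\<exists>x0. \<forall>j. T j \<le> v (x0 j) \<and> v (x0 j) \<le> real p * T j"
  using value_within_factor[OF vp p T] by metis

end


lemma cofinite_null_bounded:
  fixes f :: "'a \<Rightarrow> real"
  assumes "(f \<longlongrightarrow> 0) cofinite"
  shows "\<exists>C>0. \<forall>n. norm (f n) \<le> C"
proof -
  define E where "E = {n. \<not> norm (f n) < 1}"
  have "eventually (\<lambda>n. norm (f n) < 1) cofinite"
    using tendsto_norm_zero[OF assms] by (rule order_tendstoD) simp
  then have E: "finite E" by (simp add: E_def eventually_cofinite)
  define C where "C = 1 + (\<Sum>n\<in>E. norm (f n))"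
  have S0: "0 \<le> (\<Sum>n\<in>E. norm (f n))" by (simp add: sum_nonneg)
  have "norm (f n) \<le> C" for n
  proof (cases "n \<in> E")
    case True
    then have "norm (f n) \<le> (\<Sum>n\<in>E. norm (f n))" using E by (intro member_le_sum) auto
    then show ?thesis by (simp add: C_def)
  next
    case False
    then have "norm (f n) < 1" by (simp add: E_def)
    then show ?thesis using S0 unfolding C_def by linarith
  qed
  moreover have "C > 0" using S0 unfolding C_def by linarith
  ultimately show ?thesis by blast
qed

lemma int_cofinite_null:
  fixes f :: "int \<Rightarrow> real"
  assumes pos: "(\<lambda>m. f (int m)) \<longlonglongrightarrow> 0" and neg: "(\<lambda>m. f (- int m)) \<longlonglongrightarrow> 0"
  shows "(f \<longlongrightarrow> 0) cofinite"
proof (rule tendstoI)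
  fix e :: real assume e: "e > 0"
  obtain N1 where N1: "\<And>m. m \<ge> N1 \<Longrightarrow> dist (f (int m)) 0 < e"
    using tendstoD[OF pos e] by (auto simp: eventually_sequentially)
  obtain N2 where N2: "\<And>m. m \<ge> N2 \<Longrightarrow> dist (f (- int m)) 0 < e"
    using tendstoD[OF neg e] by (auto simp: eventually_sequentially)
  have "{n. \<not> dist (f n) 0 < e} \<subseteq> {- int N2..int N1}"
  proof (clarify)
    fix n assume n: "\<not> dist (f n) 0 < e"
    have "n \<le> int N1"
    proof (rule ccontr)
      assume "\<not> n \<le> int N1"
      then show False using N1[of "nat n"] n by simp
    qed
    moreover have "- int N2 \<le> n"
    proof (rule ccontr)
      assume "\<not> - int N2 \<le> n"
      then show False using N2[of "nat (- n)"] n by simp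
    qed
    ultimately show "n \<in> {- int N2..int N1}" by simp
  qed
  then show "eventually (\<lambda>n. dist (f n) 0 < e) cofinite"
    by (auto simp: eventually_cofinite intro: finite_subset)
qed

lemma geometric_null:
  fixes f :: "nat \<Rightarrow> real"
  assumes "eventually (\<lambda>m. norm (f m) \<le> C * q ^ m) sequentially" and "0 \<le> q" "q < 1"
  shows "f \<longlonglongrightarrow> 0"
proof (rule tendsto_0_le[OF LIMSEQ_power_zero[of q], of _ C])
  show "eventually (\<lambda>m. norm (f m) \<le> norm (q ^ m) * C) sequentially"
    using assms(1) by eventually_elim (simp add: assms(2) mult.commute)
qed (use assms in auto)


lemma D_ann_null:
  "a \<in> D_ann v r \<Longrightarrow> r \<le> \<rho> \<Longrightarrow> \<rho> < 1 \<Longrightarrow> ((\<lambda>n. v (a n) * \<rho> powi n) \<longlongrightarrow> 0) cofinite"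
  by (simp add: D_ann_def)

lemma D_ann_mono: "r \<le> r' \<Longrightarrow> D_ann v r \<subseteq> D_ann v r'"
  by (auto simp: D_ann_def)

lemma D_ann_bounded:
  assumes "a \<in> D_ann v r" "r \<le> \<rho>" "\<rho> < 1"
  shows "\<exists>C>0. \<forall>n. v (a n) * \<rho> powi n \<le> C"
proof -
  obtain C where "C > 0" "\<forall>n. norm (v (a n) * \<rho> powi n) \<le> C"
    using cofinite_null_bounded[OF D_ann_null[OF assms]] by blast
  then show ?thesis by (metis abs_ge_self order_trans real_norm_def)
qed

lemma coeff_le_rnorm:
  assumes "b \<in> D_ann v r" "r \<le> \<rho>" "\<rho> < 1"
  shows "v (b n) * \<rho> powi n \<le> rnorm v \<rho> \<rho>' b"
proof -
  obtain C where "\<forall>n. v (b n) * \<rho> powi n \<le> C" using D_ann_bounded[OF assms] by blast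
  then have "v (b n) * \<rho> powi n \<le> (SUP n. v (b n) * \<rho> powi n)"
    by (intro cSUP_upper bdd_aboveI[of _ C]) auto
  then show ?thesis by (simp add: rnorm_def)
qed

lemma D_ann_geometric:
  assumes pos: "\<And>\<rho>. s \<le> \<rho> \<Longrightarrow> \<rho> < 1 \<Longrightarrow> \<exists>C q. 0 \<le> q \<and> q < 1 \<and>
      (\<forall>\<^sub>F m in sequentially. norm (v (a (int m)) * \<rho> powi int m) \<le> C * q ^ m)"
    and neg: "\<And>\<rho>. s \<le> \<rho> \<Longrightarrow> \<rho> < 1 \<Longrightarrow> \<exists>C q. 0 \<le> q \<and> q < 1 \<and>
      (\<forall>\<^sub>F m in sequentially. norm (v (a (- int m)) * \<rho> powi (- int m)) \<le> C * q ^ m)"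
  shows "a \<in> D_ann v s"
  unfolding D_ann_def
proof (clarify, rule int_cofinite_null)
  fix \<rho> assume \<rho>: "s \<le> \<rho>" "\<rho> < 1"
  from pos[OF \<rho>] obtain C q where "0 \<le> q" "q < 1"
    "\<forall>\<^sub>F m in sequentially. norm (v (a (int m)) * \<rho> powi int m) \<le> C * q ^ m" by blast
  then show "(\<lambda>m. v (a (int m)) * \<rho> powi int m) \<longlonglongrightarrow> 0" by (intro geometric_null)
  from neg[OF \<rho>] obtain C q where "0 \<le> q" "q < 1"
    "\<forall>\<^sub>F m in sequentially. norm (v (a (- int m)) * \<rho> powi (- int m)) \<le> C * q ^ m" by blast
  then show "(\<lambda>m. v (a (- int m)) * \<rho> powi (- int m)) \<longlonglongrightarrow> 0" by (intro geometric_null)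
qed

definition part :: "(int \<Rightarrow> 'k::zero) \<Rightarrow> int set \<Rightarrow> int \<Rightarrow> 'k" where
  "part d S n = (if n \<in> S then d n else 0)"

context absolute_value
begin

lemma D_ann_dominated:
  assumes d: "d \<in> D_ann v r" and b: "\<And>n. v (b n) \<le> v (d n)"
  shows "b \<in> D_ann v r"
  unfolding D_ann_def
proof (clarify)
  fix \<rho> assume \<rho>: "r \<le> \<rho>" "\<rho> < 1"
  have "norm (v (b n) * \<rho> powi n) \<le> norm (v (d n) * \<rho> powi n) * 1" for n
    using b[of n] nonneg[of "b n"] by (simp add: abs_mult mult_right_mono)
  then show "((\<lambda>n. v (b n) * \<rho> powi n) \<longlongrightarrow> 0) cofinite"
    by (intro tendsto_0_le[OF D_ann_null[OF d \<rho>]] always_eventually) blast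
qed

lemma part_D_ann: "d \<in> D_ann v r \<Longrightarrow> part d S \<in> D_ann v r"
  by (rule D_ann_dominated) (auto simp: part_def nonneg)

lemma part_finite_D_ann:
  assumes "finite S"
  shows "part d S \<in> D_ann v r"
  unfolding D_ann_def
proof (clarify)
  fix \<rho> :: real
  have "finite {n. v (part d S n) * \<rho> powi n \<noteq> 0}"
    using assms by (rule finite_subset[rotated]) (auto simp: part_def)
  then show "((\<lambda>n. v (part d S n) * \<rho> powi n) \<longlongrightarrow> 0) cofinite"
    by (intro tendsto_eventually) (simp add: eventually_cofinite)
qed

lemma part_nonneg_D_ann:
  assumes d: "d \<in> D_ann v r" and r: "r < 1" and r': "0 < r'" and S: "S \<subseteq> {0..}"
  shows "part d S \<in> D_ann v r'"
  unfolding D_ann_def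
proof (clarify)
  fix \<rho> assume \<rho>: "r' \<le> \<rho>" "\<rho> < 1"
  define \<sigma> where "\<sigma> = max \<rho> r"
  have \<sigma>: "r \<le> \<sigma>" "\<sigma> < 1" "\<rho> \<le> \<sigma>" using \<rho> r by (auto simp: \<sigma>_def)
  have "norm (v (part d S n) * \<rho> powi n) \<le> norm (v (d n) * \<sigma> powi n) * 1" for n
  proof (cases "n \<in> S")
    case True
    then have "\<rho> powi n \<le> \<sigma> powi n" using S \<rho> r' \<sigma>(3) by (intro power_int_mono) auto
    then show ?thesis using True \<rho> r' nonneg[of "d n"]
      by (simp add: part_def abs_mult mult_left_mono)
  qed (simp add: part_def)
  then show "((\<lambda>n. v (part d S n) * \<rho> powi n) \<longlongrightarrow> 0) cofinite"
    by (intro tendsto_0_le[OF D_ann_null[OF d \<sigma>(1,2)]] always_eventually) blast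
qed

end


lemma lattice_add: "oK_submodule v L \<Longrightarrow> a \<in> L \<Longrightarrow> b \<in> L \<Longrightarrow> (\<lambda>n. a n + b n) \<in> L"
  by (simp add: oK_submodule_def)

lemma lattice_part_finite:
  assumes L: "oK_submodule v L" and S: "finite S" and single: "\<And>j. j \<in> S \<Longrightarrow> part d {j} \<in> L"
  shows "part d S \<in> L"
  using S single
proof (induction S rule: finite_induct)
  case empty
  then show ?case using L by (simp add: part_def oK_submodule_def)
next
  case (insert j S)
  have "part d (insert j S) = (\<lambda>n. part d {j} n + part d S n)"
    using insert(2) by (auto simp: fun_eq_iff part_def)
  then show ?case using insert lattice_add[OF L] by simp
qed

text \<open>The weight \<open>R\<^sup>n\<close> for \<open>n \<ge> 0\<close> and \<open>r\<^sup>n\<close> for \<open>n < 0\<close> dominates \<open>t\<^sup>n\<close> for all \<open>t \<in> [r,R]\<close>;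
  the associated balls are the basic neighbourhoods of \<open>0\<close> in \<open>D_[r,1)\<close>.\<close>
definition weight :: "real \<Rightarrow> real \<Rightarrow> int \<Rightarrow> real" where
  "weight r R n = (if 0 \<le> n then R else r) powi n"

definition weighted_ball :: "('k \<Rightarrow> real) \<Rightarrow> real \<Rightarrow> real \<Rightarrow> real \<Rightarrow> (int \<Rightarrow> 'k) set" where
  "weighted_ball v r R \<epsilon> = {b \<in> D_ann v r. \<forall>n. v (b n) * weight r R n \<le> \<epsilon>}"

lemma weight_dominates:
  assumes "0 < r" "r \<le> t" "t \<le> R"
  shows "t powi n \<le> weight r R n"
  using assms by (simp add: weight_def power_int_mono power_int_antimono)

lemma nbhd0_D_mono: "nbhd0_D v r S \<Longrightarrow> S \<subseteq> S' \<Longrightarrow> S' \<subseteq> D_ann v r \<Longrightarrow> nbhd0_D v r S'"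
  unfolding nbhd0_D_def by (meson subset_trans)

context absolute_value
begin

lemma part_single_weighted_ball:
  assumes "v (d j) * weight r R j \<le> \<epsilon>" "0 \<le> \<epsilon>"
  shows "part d {j} \<in> weighted_ball v r R \<epsilon>"
  using assms by (auto simp: weighted_ball_def part_def part_finite_D_ann)

lemma rnorm_le_weighted:
  assumes b: "\<forall>n. v (b n) * weight r R n \<le> c" and r: "0 < r"
    and t: "r \<le> t" "t \<le> R" and t': "r \<le> t'" "t' \<le> R"
  shows "rnorm v t t' b \<le> c"
proof -
  have "(SUP n. v (b n) * s powi n) \<le> c" if "r \<le> s" "s \<le> R" for s
  proof (rule cSUP_least)
    fix n
    have "v (b n) * s powi n \<le> v (b n) * weight r R n"
      using weight_dominates[OF r that] nonneg by (rule mult_left_mono)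
    then show "v (b n) * s powi n \<le> c" using b order_trans by blast
  qed simp
  then show ?thesis using t t' by (simp add: rnorm_def)
qed

lemma nbhd_contains_weighted_ball:
  assumes N: "nbhd0_D v r S" and r: "0 < r" "r < 1"
  shows "\<exists>\<epsilon> R. 0 < \<epsilon> \<and> r \<le> R \<and> R < 1 \<and> weighted_ball v r R \<epsilon> \<subseteq> S"
proof -
  obtain F \<epsilon> where F: "finite F" "\<forall>(t, t')\<in>F. r \<le> t \<and> t < t' \<and> t' < 1" "0 < \<epsilon>"
    and sub: "{b \<in> D_ann v r. \<forall>(t, t')\<in>F. rnorm v t t' b < \<epsilon>} \<subseteq> S"
    using N unfolding nbhd0_D_def by blast
  define R where "R = Max (insert r (snd ` F))"
  have fin: "finite (insert r (snd ` F))" using F(1) by simp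
  have R: "r \<le> R" "R < 1"
    unfolding R_def using fin F(2) r by (simp, subst Max_less_iff) auto
  have R_ge: "t' \<le> R" if "(t, t') \<in> F" for t t'
    unfolding R_def using fin that by (intro Max_ge) force+
  have "weighted_ball v r R (\<epsilon> / 2) \<subseteq> S"
  proof
    fix b assume "b \<in> weighted_ball v r R (\<epsilon> / 2)"
    then have b: "b \<in> D_ann v r" "\<forall>n. v (b n) * weight r R n \<le> \<epsilon> / 2"
      by (auto simp: weighted_ball_def)
    have "rnorm v t t' b < \<epsilon>" if tt: "(t, t') \<in> F" for t t'
    proof -
      have "r \<le> t" "t < t'" using F(2) tt by fast+
      then have "rnorm v t t' b \<le> \<epsilon> / 2"
        using rnorm_le_weighted[OF b(2) r(1)] R_ge[OF tt] by simp
      then show ?thesis using F(3) by simp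
    qed
    then show "b \<in> S" using sub b(1) by blast
  qed
  then show ?thesis using F(3) R by (intro exI[of _ "\<epsilon> / 2"] exI[of _ R]) simp
qed

text \<open>Nice lattices are neighbourhoods of \<open>0\<close> in every \<open>D_[r,1)\<close>: if \<open>x\<^sub>0\<close> converges on \<open>[s,1)\<close>, then
  its coefficients are bounded by \<open>C \<rho>\<^sup>-\<^sup>n\<close> for \<open>\<rho> = max r s\<close>, and \<open>L_{x\<^sub>0}\<close> contains the norm ball of
  radius \<open>1/C\<close>.\<close>
lemma L_nice_nbhd:
  assumes x0: "x0 \<in> Robba v" and r: "0 < r" "r < 1"
  shows "nbhd0_D v r (L_nice v x0 \<inter> D_ann v r)"
proof -
  obtain s where s: "s < 1" "x0 \<in> D_ann v s" using x0 by (auto simp: Robba_def)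
  define \<rho> where "\<rho> = max r s"
  define \<rho>' where "\<rho>' = (\<rho> + 1) / 2"
  have \<rho>: "r \<le> \<rho>" "s \<le> \<rho>" "\<rho> < 1" "0 < \<rho>" "\<rho> < \<rho>'" "\<rho>' < 1"
    using r s by (auto simp: \<rho>_def \<rho>'_def)
  obtain C where C: "C > 0" "\<And>n. v (x0 n) * \<rho> powi n \<le> C"
    using D_ann_bounded[OF s(2) \<rho>(2,3)] by blast
  have "{b \<in> D_ann v r. \<forall>(t, t')\<in>{(\<rho>, \<rho>')}. rnorm v t t' b < 1 / C} \<subseteq> L_nice v x0 \<inter> D_ann v r"
  proof
    fix b assume "b \<in> {b \<in> D_ann v r. \<forall>(t, t')\<in>{(\<rho>, \<rho>')}. rnorm v t t' b < 1 / C}"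
    then have b: "b \<in> D_ann v r" and bn: "rnorm v \<rho> \<rho>' b < 1 / C" by auto
    have "v (x0 (- n)) * v (b n) \<le> 1" for n
    proof -
      have "\<rho> powi (- n) * \<rho> powi n = 1" using \<rho>(4) by (simp add: power_int_minus)
      then have "v (x0 (- n)) * v (b n) = (v (x0 (- n)) * \<rho> powi (- n)) * (v (b n) * \<rho> powi n)"
        by (metis mult.left_commute mult_1_right)
      also have "\<dots> \<le> C * (1 / C)"
      proof (rule mult_mono)
        show "v (b n) * \<rho> powi n \<le> 1 / C"
          using coeff_le_rnorm[OF b \<rho>(1,3), of n \<rho>'] bn by linarith
        show "0 \<le> v (b n) * \<rho> powi n" using \<rho>(4) nonneg by simp
      qed (use C in auto)
      finally show ?thesis using C(1) by simp
    qed
    moreover have "b \<in> Robba v" using b r by (auto simp: Robba_def)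
    ultimately show "b \<in> L_nice v x0 \<inter> D_ann v r" using b by (simp add: L_nice_def)
  qed
  moreover have "\<forall>(t, t')\<in>{(\<rho>, \<rho>')}. r \<le> t \<and> t < t' \<and> t' < 1" using \<rho> by simp
  ultimately show ?thesis unfolding nbhd0_D_def using C(1)
    by (intro conjI exI[of _ "{(\<rho>, \<rho>')}"] exI[of _ "1 / C"]) simp_all
qed

text \<open>Duality between \<open>d\<close> and \<open>x\<^sub>0\<close>: if \<open>|c| |x| \<le> 1\<close> and \<open>w \<le> \<epsilon> |c|\<close>, then \<open>|x| w \<le> \<epsilon>\<close>; applied
  with \<open>c = x\<^sub>0,\<^sub>-\<^sub>n\<close> and \<open>x = d\<^sub>n\<close>.\<close>
lemma dual_value_bound:
  assumes dual: "v c * v x \<le> 1" and w: "w \<le> \<epsilon> * v c" and \<epsilon>: "0 \<le> \<epsilon>"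
  shows "v x * w \<le> \<epsilon>"
proof -
  have "v x * w \<le> v x * (\<epsilon> * v c)" using w nonneg by (rule mult_left_mono)
  also have "\<dots> = \<epsilon> * (v c * v x)" by (simp add: algebra_simps)
  also have "\<dots> \<le> \<epsilon>" using mult_left_mono[OF dual \<epsilon>] by simp
  finally show ?thesis .
qed

text \<open>If the coefficients of \<open>x\<^sub>0\<close> are large enough, then for \<open>d \<in> L_{x\<^sub>0}\<close> the
  nonnegative part of \<open>d\<close> lies in \<open>B\<^sub>0\<close>, each single negative term in some \<open>B\<^sub>k\<close>, and the negative
  tail beyond finitely many exceptional terms in the ball \<open>B\<^sub>k\<close> whose radius lies in the
  convergence annulus of \<open>d\<close>.\<close>
lemma L_nice_subset:
  fixes r R \<epsilon> :: "nat \<Rightarrow> real"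
  assumes L: "oK_submodule v L"
    and balls: "\<And>k. weighted_ball v (r k) (R k) (\<epsilon> k) \<subseteq> L"
    and r: "\<And>k. 0 < r k" "\<And>k. r k < 1" "\<And>\<rho>. \<rho> < 1 \<Longrightarrow> \<exists>k. \<rho> < r k"
    and \<epsilon>: "\<And>k. 0 < \<epsilon> k"
    and x0_nonneg: "\<And>n. 0 \<le> n \<Longrightarrow> R 0 powi n \<le> \<epsilon> 0 * v (x0 (- n))"
    and x0_neg: "\<And>n. n < 0 \<Longrightarrow> \<exists>k. r k powi n \<le> \<epsilon> k * v (x0 (- n))"
  shows "L_nice v x0 \<subseteq> L"
proof
  fix d assume "d \<in> L_nice v x0"
  then have dR: "d \<in> Robba v" and dual: "\<And>n. v (x0 (- n)) * v (d n) \<le> 1"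
    by (auto simp: L_nice_def)
  obtain r0 where r0: "r0 < 1" "d \<in> D_ann v r0" using dR by (auto simp: Robba_def)
  obtain k where k: "r0 < r k" using r(3)[OF r0(1)] by blast
  have dk: "d \<in> D_ann v (r k)" using D_ann_mono[of r0 "r k"] k r0(2) by auto
  define E where "E = {n. \<not> v (d n) * r k powi n \<le> \<epsilon> k}"
  have "eventually (\<lambda>n. v (d n) * r k powi n < \<epsilon> k) cofinite"
    using order_tendstoD(2)[OF D_ann_null[OF dk order_refl r(2)] \<epsilon>] .
  then have E: "finite E"
    by (auto simp: E_def eventually_cofinite elim: finite_subset[rotated])
  have "v (d n) * R 0 powi n \<le> \<epsilon> 0" if "0 \<le> n" for n
    using dual_value_bound[OF dual[of n] x0_nonneg[OF that]] \<epsilon>[of 0] by simp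
  then have "part d {0..} \<in> weighted_ball v (r 0) (R 0) (\<epsilon> 0)"
    using part_nonneg_D_ann[OF r0(2,1) r(1)] \<epsilon>[of 0]
    by (auto simp: weighted_ball_def weight_def part_def less_imp_le)
  then have nonneg_part: "part d {0..} \<in> L" using balls by blast
  have "part d ({..<0} - E) \<in> weighted_ball v (r k) (R k) (\<epsilon> k)"
    using part_D_ann[OF dk] \<epsilon>[of k] by (auto simp: weighted_ball_def weight_def part_def E_def)
  then have tail: "part d ({..<0} - E) \<in> L" using balls by blast
  have exceptional: "part d ({..<0} \<inter> E) \<in> L"
  proof (rule lattice_part_finite[OF L])
    show "finite ({..<0} \<inter> E)" using E by simp
    fix j assume "j \<in> {..<0} \<inter> E"
    then have j: "j < 0" by simp
    obtain k' where "r k' powi j \<le> \<epsilon> k' * v (x0 (- j))" using x0_neg[OF j] by blast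
    then have "v (d j) * weight (r k') (R k') j \<le> \<epsilon> k'"
      using dual_value_bound[OF dual[of j]] \<epsilon>[of k'] j by (simp add: weight_def less_imp_le)
    then show "part d {j} \<in> L"
      using part_single_weighted_ball \<epsilon>[of k'] balls by (meson less_imp_le subsetD)
  qed
  have "d = (\<lambda>n. (\<lambda>n. part d {0..} n + part d ({..<0} - E) n) n + part d ({..<0} \<inter> E) n)"
    by (auto simp: fun_eq_iff part_def)
  then show "d \<in> L"
    using lattice_add[OF L lattice_add[OF L nonneg_part tail] exceptional] by simp
qed

lemma D_ann_of_coefficient_bounds:
  assumes r: "\<And>k. 0 < r k" "\<And>\<rho>. \<rho> < 1 \<Longrightarrow> \<exists>k. \<rho> < r k"
    and \<epsilon>: "\<And>k. 0 < \<epsilon> k" and Q: "0 \<le> Q" and e: "0 < e"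
    and upper_pos: "\<And>k m. k \<le> m \<Longrightarrow> \<epsilon> k * r k ^ m * v (x0 (int m)) \<le> C"
    and upper_neg: "\<And>m. e * v (x0 (- int m)) \<le> C * Q ^ m"
  shows "x0 \<in> D_ann v ((1 + Q) / 2)"
proof (rule D_ann_geometric)
  fix \<rho> assume \<rho>: "(1 + Q) / 2 \<le> \<rho>" "\<rho> < 1"
  have \<rho>0: "0 < \<rho>" and Q\<rho>: "Q < \<rho>" using \<rho> Q by (simp_all add: field_simps)
  obtain k where k: "\<rho> < r k" using r(2)[OF \<rho>(2)] by blast
  have "norm (v (x0 (int m)) * \<rho> powi int m) \<le> C / \<epsilon> k * (\<rho> / r k) ^ m" if "k \<le> m" for m
  proof -
    have "norm (v (x0 (int m)) * \<rho> powi int m)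
        = \<epsilon> k * r k ^ m * v (x0 (int m)) * (\<rho> / r k) ^ m / \<epsilon> k"
      using \<rho>0 r(1)[of k] \<epsilon>[of k] nonneg by (simp add: power_divide)
    also have "\<dots> \<le> C * (\<rho> / r k) ^ m / \<epsilon> k"
      using upper_pos[OF that] \<rho>0 r(1)[of k] \<epsilon>[of k]
      by (intro divide_right_mono mult_right_mono) auto
    finally show ?thesis by simp
  qed
  then show "\<exists>C q. 0 \<le> q \<and> q < 1 \<and>
      (\<forall>\<^sub>F m in sequentially. norm (v (x0 (int m)) * \<rho> powi int m) \<le> C * q ^ m)"
    using \<rho>0 k r(1)[of k]
    by (intro exI[of _ "C / \<epsilon> k"] exI[of _ "\<rho> / r k"] conjI eventually_sequentiallyI[of k]) auto
next
  fix \<rho> assume \<rho>: "(1 + Q) / 2 \<le> \<rho>" "\<rho> < 1"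
  have \<rho>0: "0 < \<rho>" and Q\<rho>: "Q < \<rho>" using \<rho> Q by (simp_all add: field_simps)
  have "norm (v (x0 (- int m)) * \<rho> powi (- int m)) \<le> C / e * (Q / \<rho>) ^ m" for m
  proof -
    have "norm (v (x0 (- int m)) * \<rho> powi (- int m)) = e * v (x0 (- int m)) / e / \<rho> ^ m"
      using \<rho>0 e nonneg by (simp add: power_int_minus field_simps)
    also have "\<dots> \<le> C * Q ^ m / e / \<rho> ^ m"
      using upper_neg[of m] \<rho>0 e by (intro divide_right_mono) auto
    finally show ?thesis by (simp add: power_divide)
  qed
  then show "\<exists>C q. 0 \<le> q \<and> q < 1 \<and>
      (\<forall>\<^sub>F m in sequentially. norm (v (x0 (- int m)) * \<rho> powi (- int m)) \<le> C * q ^ m)"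
    using \<rho>0 Q Q\<rho> by (intro exI[of _ "C / e"] exI[of _ "Q / \<rho>"] conjI always_eventually allI) auto
qed

text \<open>The coefficient of \<open>T\<^sup>m\<close>
  has absolute value about \<open>min\<^sub>k\<^sub>\<le>\<^sub>m 1/(\<epsilon>\<^sub>k r\<^sub>k\<^sup>m)\<close>, that of \<open>T\<^sup>-\<^sup>m\<close> about \<open>Q\<^sup>m/\<epsilon>\<^sub>0\<close>.\<close>
lemma exists_nice_generator:
  fixes r \<epsilon> :: "nat \<Rightarrow> real"
  assumes vp: "v (of_nat p) = 1 / real p" and p: "p > 1"
    and r: "\<And>k. 0 < r k" "\<And>\<rho>. \<rho> < 1 \<Longrightarrow> \<exists>k. \<rho> < r k"
    and \<epsilon>: "\<And>k. 0 < \<epsilon> k" and Q: "0 < Q" "Q < 1"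
  shows "\<exists>x0\<in>Robba v. (\<forall>n. 0 \<le> n \<longrightarrow> Q powi n \<le> \<epsilon> 0 * v (x0 (- n))) \<and>
           (\<forall>n. n < 0 \<longrightarrow> (\<exists>k. r k powi n \<le> \<epsilon> k * v (x0 (- n))))"
proof -
  define t where "t m = Min ((\<lambda>k. 1 / (\<epsilon> k * r k ^ m)) ` {..m})" for m
  define T where "T j = (if j \<le> 0 then Q ^ nat (- j) / \<epsilon> 0 else t (nat j))" for j
  have t_attained: "\<exists>k. t m = 1 / (\<epsilon> k * r k ^ m)" for m
  proof -
    have "t m \<in> (\<lambda>k. 1 / (\<epsilon> k * r k ^ m)) ` {..m}" unfolding t_def by (rule Min_in) auto
    then show ?thesis by blast
  qed
  have t_le: "t m \<le> 1 / (\<epsilon> k * r k ^ m)" if "k \<le> m" for k m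
    unfolding t_def using that by (intro Min_le) auto
  have T_int: "T (int m) = t m" for m
    by (cases "m = 0") (simp_all add: T_def t_def)
  have T_pos: "0 < T j" for j
    using t_attained[of "nat j"] \<epsilon> r(1) Q by (auto simp: T_def)
  obtain x0 where x0: "\<And>j. T j \<le> v (x0 j)" "\<And>j. v (x0 j) \<le> real p * T j"
    using series_with_values[where T = T, OF vp p T_pos] by blast
  have lower_pos: "\<exists>k. r k powi n \<le> \<epsilon> k * v (x0 (- n))" if "n < 0" for n
  proof -
    define m where "m = nat (- n)"
    have n: "n = - int m" using that by (simp add: m_def)
    obtain k where "t m = 1 / (\<epsilon> k * r k ^ m)" using t_attained by blast
    then have "1 / (\<epsilon> k * r k ^ m) \<le> v (x0 (- n))" using x0(1)[of "int m"] by (simp add: n T_int)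
    then have "r k powi n \<le> \<epsilon> k * v (x0 (- n))"
      using \<epsilon>[of k] r(1)[of k] by (simp add: n power_int_minus field_simps)
    then show ?thesis by blast
  qed
  have lower_neg: "Q powi n \<le> \<epsilon> 0 * v (x0 (- n))" if "0 \<le> n" for n
    using x0(1)[of "- n"] that \<epsilon>[of 0] by (simp add: T_def power_int_def field_simps)
  have "x0 \<in> D_ann v ((1 + Q) / 2)"
  proof (rule D_ann_of_coefficient_bounds[OF r \<epsilon> less_imp_le[OF Q(1)] \<epsilon>[of 0]])
    show "\<epsilon> k * r k ^ m * v (x0 (int m)) \<le> real p" if "k \<le> m" for k m
    proof -
      have "v (x0 (int m)) \<le> real p * t m" using x0(2)[of "int m"] by (simp add: T_int)
      also have "\<dots> \<le> real p * (1 / (\<epsilon> k * r k ^ m))" using t_le[OF that] by (rule mult_left_mono) simp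
      finally show ?thesis using \<epsilon>[of k] r(1)[of k] by (simp add: le_divide_eq mult.commute)
    qed
    show "\<epsilon> 0 * v (x0 (- int m)) \<le> real p * Q ^ m" for m
      using x0(2)[of "- int m"] \<epsilon>[of 0] by (simp add: T_def field_simps)
  qed
  moreover have "(1 + Q) / 2 \<in> {0<..<1}" using Q by simp
  ultimately have "x0 \<in> Robba v" unfolding Robba_def by blast
  then show ?thesis using lower_pos lower_neg by blast
qed

lemma nice_sublattice:
  assumes vp: "v (of_nat p) = 1 / real p" and p: "p > 1"
    and L: "oK_submodule v L" and N: "\<And>r. r \<in> {0<..<1} \<Longrightarrow> nbhd0_D v r (L \<inter> D_ann v r)"
  shows "\<exists>x0\<in>Robba v. L_nice v x0 \<subseteq> L"
proof -
  define r :: "nat \<Rightarrow> real" where "r k = 1 - 1 / (real k + 2)" for k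
  have r: "0 < r k" "r k < 1" for k by (auto simp: r_def field_simps)
  have r_cofinal: "\<exists>k. \<rho> < r k" if "\<rho> < 1" for \<rho>
  proof -
    obtain k where "1 / (1 - \<rho>) < real k" using reals_Archimedean2 by blast
    then have "1 < (real k + 2) * (1 - \<rho>)" using that by (simp add: field_simps)
    then show ?thesis using that by (intro exI[of _ k]) (simp add: r_def field_simps)
  qed
  have "\<exists>\<epsilon> R. 0 < \<epsilon> \<and> r k \<le> R \<and> R < 1 \<and> weighted_ball v (r k) R \<epsilon> \<subseteq> L" for k
  proof -
    have "r k \<in> {0<..<1}" using r[of k] by simp
    from nbhd_contains_weighted_ball[OF N[OF this] r] show ?thesis by blast
  qed
  then have "\<forall>k. \<exists>\<epsilon> R. 0 < \<epsilon> \<and> r k \<le> R \<and> R < 1 \<and> weighted_ball v (r k) R \<epsilon> \<subseteq> L" by blast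
  then have "\<exists>\<epsilon> R. \<forall>k. 0 < \<epsilon> k \<and> r k \<le> R k \<and> R k < 1 \<and> weighted_ball v (r k) (R k) (\<epsilon> k) \<subseteq> L"
    by (simp only: choice_iff)
  then obtain \<epsilon> R where \<epsilon>: "\<And>k. 0 < \<epsilon> k" and R: "\<And>k. r k \<le> R k" "\<And>k. R k < 1"
    and balls: "\<And>k. weighted_ball v (r k) (R k) (\<epsilon> k) \<subseteq> L"
    by blast
  have R0: "0 < R 0" using r(1)[of 0] R(1)[of 0] by linarith
  obtain x0 where "x0 \<in> Robba v" and "\<forall>n. 0 \<le> n \<longrightarrow> R 0 powi n \<le> \<epsilon> 0 * v (x0 (- n))"
    and "\<forall>n. n < 0 \<longrightarrow> (\<exists>k. r k powi n \<le> \<epsilon> k * v (x0 (- n)))"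
    using exists_nice_generator[where r = r and \<epsilon> = \<epsilon> and Q = "R 0", OF vp p r(1) r_cofinal \<epsilon> R0 R(2)]
    by blast
  then show ?thesis
    using L_nice_subset[where r = r and R = R and \<epsilon> = \<epsilon>, OF L balls r r_cofinal \<epsilon>] by blast
qed

lemma nice_open_imp_indlim_open:
  assumes "nice_open v U"
  shows "indlim_open v U"
  unfolding indlim_open_def
proof (intro conjI ballI)
  show "U \<subseteq> Robba v" using assms by (simp add: nice_open_def)
  fix x assume "x \<in> U"
  then obtain L x0 where L: "oK_submodule v L" "x0 \<in> Robba v" "L_nice v x0 \<subseteq> L" "translate x L \<subseteq> U"
    using assms unfolding nice_open_def by blast
  have "nbhd0_D v r (L \<inter> D_ann v r)" if "r \<in> {0<..<1}" for r
    using L_nice_nbhd[OF L(2)] that L(3) by (auto intro: nbhd0_D_mono)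
  then show "\<exists>L. oK_submodule v L \<and> (\<forall>r\<in>{0<..<1}. nbhd0_D v r (L \<inter> D_ann v r)) \<and> translate x L \<subseteq> U"
    using L by blast
qed

lemma indlim_open_imp_nice_open:
  assumes vp: "v (of_nat p) = 1 / real p" and p: "p > 1" and U: "indlim_open v U"
  shows "nice_open v U"
  unfolding nice_open_def
proof (intro conjI ballI)
  show "U \<subseteq> Robba v" using U by (simp add: indlim_open_def)
  fix x assume "x \<in> U"
  then obtain L where L: "oK_submodule v L" "\<forall>r\<in>{0<..<1}. nbhd0_D v r (L \<inter> D_ann v r)"
    "translate x L \<subseteq> U"
    using U unfolding indlim_open_def by blast
  then show "\<exists>L. oK_submodule v L \<and> (\<exists>x0\<in>Robba v. L_nice v x0 \<subseteq> L) \<and> translate x L \<subseteq> U"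
    using nice_sublattice[OF vp p L(1)] by blast
qed

end

theorem proposition5p13:
  fixes p :: nat and v :: "'k::field_char_0 \<Rightarrow> real"
  assumes "prime p" and "odd p" and "cdv_field_over_Qp p v"
  shows "{U. nice_open v U} = {U. indlim_open v U}"
proof -
  interpret absolute_value v
    using assms(3) by unfold_locales (simp_all add: cdv_field_over_Qp_def)
  have vp: "v (of_nat p) = 1 / real p" using assms(3) by (simp add: cdv_field_over_Qp_def)
  have p: "p > 1" using assms(1) by (rule prime_gt_1_nat)
  show ?thesis
    using nice_open_imp_indlim_open indlim_open_imp_nice_open[OF vp p] by blast
qed

end
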